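(* Let $(X_m)_{m\in\mathbb Z}$ be a homogeneous second order recurrence sequence with constant coefficients. For integers $a,b,c,d,e$ put $$\Delta=X_{d-a}X_{e-b}-X_{e-a}X_{d-b},\quad \Delta_1=X_{d-c}X_{e-b}-X_{e-c}X_{d-b},\quad \Delta_2=X_{d-a}X_{e-c}-X_{e-a}X_{d-c}.$$ Let $k,m$ be integers. Provided every denominator appearing below is nonzero and, when $k<0$, the base of every power $(\cdot)^r$ or $(\cdot)^k$ appearing is nonzero, the following hold: $$\sum_{r=0}^k\left(\frac{\Delta}{\Delta_1}\right)^rX_{m-k(a-c)-b+c+(a-c)r}=\frac{\Delta}{\Delta_2}\left(\frac{\Delta}{\Delta_1}\right)^kX_m-\frac{\Delta_1}{\Delta_2}X_{m-(k+1)(a-c)},$$ $$\sum_{r=0}^k\left(\frac{\Delta}{\Delta_2}\right)^rX_{m-k(b-c)-a+c+(b-c)r}=\frac{\Delta}{\Delta_1}\left(\frac{\Delta}{\Delta_2}\right)^kX_m-\frac{\Delta_2}{\Delta_1}X_{m-(k+1)(b-c)},$$ $$\sum_{r=0}^k\left(\frac{-\Delta_2}{\Delta_1}\right)^rX_{m-k(a-b)+b-c+(a-b)r}=\frac{\Delta_2}{\Delta}\left(\frac{-\Delta_2}{\Delta_1}\right)^kX_m+\frac{\Delta_1}{\Delta}X_{m-(k+1)(a-b)}.$$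
   Context: A homogeneous second order recurrence sequence with constant coefficients is a sequence $(X_m)_{m\in\mathbb Z}$ of complex numbers for which there are constants $p,q\in\mathbb C$, $q\neq 0$, with $X_m=pX_{m-1}+qX_{m-2}$ for all $m\in\mathbb Z$. Summation convention: for an integer $k<0$, $\sum_{r=0}^k f_r$ means $-\sum_{r=k+1}^{-1} f_r$ (in particular it equals $0$ when $k=-1$). *)

theory Defs
  imports Complex_Main
begin

definition second_order_rec :: "(int \<Rightarrow> complex) \<Rightarrow> bool" where
  "second_order_rec X \<longleftrightarrow>
     (\<exists>p q. q \<noteq> 0 \<and> (\<forall>m. X m = p * X (m - 1) + q * X (m - 2)))"

definition gsum :: "int \<Rightarrow> (int \<Rightarrow> complex) \<Rightarrow> complex" where
  "gsum k f = (if 0 \<le> k then (\<Sum>r = 0..k. f r) else - (\<Sum>r = k + 1..-1. f r))"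

end

theory Submission imports Defs begin

text \<open>For every \<open>n\<close> the three-term relation
  \<open>\<Delta> X (n - c) = \<Delta>\<^sub>1 X (n - a) + \<Delta>\<^sub>2 X (n - b)\<close> holds: it is the expansion of the
  determinant with rows \<open>(X (r - a), X (r - b), X (r - c))\<close> for \<open>r = d, e, n\<close>, which vanishes
  because the solutions of a second order recurrence form a two-dimensional space. Each identity
  is then a telescoping sum: multiplied by the appropriate power of the ratio, the relation turns
  every summand into a difference of consecutive terms.\<close>

definition lin_rec :: "'a::comm_ring \<Rightarrow> 'a \<Rightarrow> (int \<Rightarrow> 'a) \<Rightarrow> bool" where
  "lin_rec p q Y \<longleftrightarrow> (\<forall>n. Y n = p * Y (n - 1) + q * Y (n - 2))"

lemma second_order_rec_iff: "second_order_rec X \<longleftrightarrow> (\<exists>p q. q \<noteq> 0 \<and> lin_rec p q X)"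
  unfolding second_order_rec_def lin_rec_def ..

lemma lin_rec_step:
  assumes "lin_rec p q Y"
  shows "Y (n - s) = p * Y (n - s - 1) + q * Y (n - s - 2)"
  using assms unfolding lin_rec_def by (metis diff_diff_eq)

lemma lin_rec_eq_0:
  fixes Y :: "int \<Rightarrow> 'a::field"
  assumes "q \<noteq> 0" and rec: "lin_rec p q Y" and "Y s = 0" and "Y (s + 1) = 0"
  shows "Y n = 0"
proof -
  have fw: "Y (s + int k) = 0 \<and> Y (s + int k + 1) = 0" for k :: nat
  proof (induction k)
    case (Suc k)
    have "Y (s + int k + 2) = p * Y (s + int k + 1) + q * Y (s + int k)"
      using rec unfolding lin_rec_def by (metis add_diff_cancel_right' diff_diff_eq one_add_one)
    with Suc show ?case by (simp add: algebra_simps)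
  qed (use assms in simp)
  have bw: "Y (s - int k) = 0 \<and> Y (s - int k + 1) = 0" for k :: nat
  proof (induction k)
    case (Suc k)
    have "Y (s - int k + 1) = p * Y (s - int k) + q * Y (s - int k - 1)"
      using rec unfolding lin_rec_def by (metis add_diff_cancel_right' diff_diff_eq one_add_one)
    with Suc \<open>q \<noteq> 0\<close> have "Y (s - int k - 1) = 0"
      by (metis add_cancel_right_left mult_eq_0_iff)
    with Suc show ?case by (simp add: algebra_simps)
  qed (use assms in simp)
  show ?thesis
  proof (cases "s \<le> n")
    case True
    then show ?thesis using fw[of "nat (n - s)"] by simp
  next
    case False
    then show ?thesis using bw[of "nat (s - n)"] by simp
  qed
qed

definition shift_det :: "(int \<Rightarrow> 'a::comm_ring) \<Rightarrow> int \<Rightarrow> int \<Rightarrow> int \<Rightarrow> int \<Rightarrow> int \<Rightarrow> int \<Rightarrow> 'a" where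
  "shift_det X a b c i j n =
     X (i - a) * (X (j - b) * X (n - c) - X (j - c) * X (n - b))
   - X (i - b) * (X (j - a) * X (n - c) - X (j - c) * X (n - a))
   + X (i - c) * (X (j - a) * X (n - b) - X (j - b) * X (n - a))"

lemma shift_det_rotate: "shift_det X a b c i j n = shift_det X a b c j n i"
  unfolding shift_det_def by (simp add: algebra_simps)

lemma lin_rec_shift_det:
  assumes "lin_rec p q X"
  shows "lin_rec p q (shift_det X a b c i j)"
  unfolding lin_rec_def shift_det_def
  by (simp add: lin_rec_step[OF assms, of _ a] lin_rec_step[OF assms, of _ b]
      lin_rec_step[OF assms, of _ c] algebra_simps)

lemma shift_det_eq_0:
  fixes X :: "int \<Rightarrow> 'a::field"
  assumes "q \<noteq> 0" and rec: "lin_rec p q X"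
  shows "shift_det X a b c i j n = 0"
proof -
  \<comment> \<open>First for consecutive rows \<open>i, i + 1\<close> (the third row repeats one of them at
    \<open>n = i, i + 1\<close>), then for arbitrary \<open>i\<close> by regarding the determinant as a solution in \<open>i\<close>.\<close>
  have consecutive: "shift_det X a b c i (i + 1) n = 0" for i n
    by (rule lin_rec_eq_0[OF \<open>q \<noteq> 0\<close> lin_rec_shift_det[OF rec], where s = i])
      (simp_all add: shift_det_def algebra_simps)
  have "lin_rec p q (\<lambda>i. shift_det X a b c j n i)"
    by (rule lin_rec_shift_det[OF rec])
  then have "lin_rec p q (\<lambda>i. shift_det X a b c i j n)"
    by (simp add: shift_det_rotate[of X a b c _ j n, symmetric])
  then show ?thesis
    by (rule lin_rec_eq_0[OF \<open>q \<noteq> 0\<close>, where s = "j - 1"])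
      (use consecutive[of "j - 1" n] in \<open>simp_all add: shift_det_def algebra_simps\<close>)
qed

lemma second_order_rec_three_term:
  assumes "second_order_rec X"
  shows "(X (d - a) * X (e - b) - X (e - a) * X (d - b)) * X (n - c)
       = (X (d - c) * X (e - b) - X (e - c) * X (d - b)) * X (n - a)
       + (X (d - a) * X (e - c) - X (e - a) * X (d - c)) * X (n - b)"
proof -
  obtain p q where "q \<noteq> 0" "lin_rec p q X"
    using assms unfolding second_order_rec_iff by blast
  then have "shift_det X a b c d e n = 0" by (rule shift_det_eq_0)
  then show ?thesis unfolding shift_det_def by algebra
qed

lemma sum_int_telescope: "(\<Sum>r = a..a + int n - 1. h (r + 1) - h r) = h (a + int n) - (h a :: 'a::ab_group_add)"
proof (induction n)
  case (Suc n)
  have "{a..a + int (Suc n) - 1} = insert (a + int n) {a..a + int n - 1}" by auto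
  then show ?case using Suc by (simp add: algebra_simps)
qed simp

lemma gsum_telescope:
  assumes "\<And>r. r \<in> (if 0 \<le> k then {0..k} else {k + 1..-1}) \<Longrightarrow> g r = h (r + 1) - h r"
  shows "gsum k g = h (k + 1) - h 0"
proof (cases "0 \<le> k")
  case True
  then have "gsum k g = (\<Sum>r = 0..k. g r)" by (simp add: gsum_def)
  also have "\<dots> = (\<Sum>r = 0..0 + int (nat (k + 1)) - 1. h (r + 1) - h r)"
    using True assms by (intro sum.cong) auto
  finally show ?thesis using True by (simp only: sum_int_telescope) simp
next
  case False
  then have "gsum k g = - (\<Sum>r = k + 1..-1. g r)" by (simp add: gsum_def)
  also have "\<dots> = - (\<Sum>r = k + 1..(k + 1) + int (nat (- k - 1)) - 1. h (r + 1) - h r)"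
    using False assms by (intro arg_cong[where f = uminus] sum.cong) auto
  finally show ?thesis using False by (simp only: sum_int_telescope) simp
qed

lemma gsum_three_term:
  fixes X :: "int \<Rightarrow> complex"
  assumes rel: "\<And>n. D * X (n - c) = D1 * X (n - a) + D2 * X (n - b)"
    and "D1 \<noteq> 0" "D2 \<noteq> 0" "k < 0 \<longrightarrow> D \<noteq> 0"
  shows "gsum k (\<lambda>r. (D / D1) powi r * X (m - k * (a - c) - b + c + (a - c) * r))
      = D / D2 * (D / D1) powi k * X m - D1 / D2 * X (m - (k + 1) * (a - c))"
proof -
  define t where "t = D / D1"
  define h where "h r = D1 / D2 * t powi r * X (m - k * (a - c) + (a - c) * (r - 1))" for r
  \<comment> \<open>Not for \<open>t = 0, r = -1\<close>, as \<open>0 powi -1 = 0\<close>; that case only arises when \<open>k < 0\<close>.\<close>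
  have powi_succ: "t powi (r + 1) = t powi r * t" if "0 \<le> k \<and> 0 \<le> r \<or> k < 0" for r
    using that assms by (intro power_int_add_1) (auto simp: t_def)
  have "t powi r * X (m - k * (a - c) - b + c + (a - c) * r) = h (r + 1) - h r"
    if "0 \<le> k \<and> 0 \<le> r \<or> k < 0" for r
  proof -
    define n where "n = m - k * (a - c) + (a - c) * r + c"
    have "h (r + 1) = D1 / D2 * (t powi r * t) * X (n - c)"
      unfolding h_def powi_succ[OF that] n_def by (simp add: algebra_simps)
    moreover have "h r = D1 / D2 * t powi r * X (n - a)"
      unfolding h_def n_def by (simp add: algebra_simps)
    ultimately have "h (r + 1) - h r = t powi r * (D * X (n - c) - D1 * X (n - a)) / D2"
      using \<open>D1 \<noteq> 0\<close> \<open>D2 \<noteq> 0\<close> unfolding t_def by (simp add: field_simps)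
    also have "\<dots> = t powi r * X (n - b)"
      using rel[of n] \<open>D2 \<noteq> 0\<close> by simp
    finally show ?thesis unfolding n_def by (simp add: algebra_simps)
  qed
  then have "gsum k (\<lambda>r. t powi r * X (m - k * (a - c) - b + c + (a - c) * r)) = h (k + 1) - h 0"
    by (intro gsum_telescope) (auto split: if_splits)
  also have "h (k + 1) = D / D2 * t powi k * X m"
  proof -
    have "t powi (k + 1) = t powi k * t" by (rule powi_succ) linarith
    then show ?thesis using \<open>D1 \<noteq> 0\<close> unfolding h_def t_def by simp
  qed
  also have "h 0 = D1 / D2 * X (m - (k + 1) * (a - c))"
    unfolding h_def by (simp add: algebra_simps)
  finally show ?thesis unfolding t_def .
qed

theorem lemma5:
  fixes X :: "int \<Rightarrow> complex" and a b c d e k m :: int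
  assumes "second_order_rec X"
  defines "\<Delta> \<equiv> X (d - a) * X (e - b) - X (e - a) * X (d - b)"
      and "\<Delta>1 \<equiv> X (d - c) * X (e - b) - X (e - c) * X (d - b)"
      and "\<Delta>2 \<equiv> X (d - a) * X (e - c) - X (e - a) * X (d - c)"
  shows
   "((\<Delta>1 \<noteq> 0 \<and> \<Delta>2 \<noteq> 0 \<and> (k < 0 \<longrightarrow> \<Delta> \<noteq> 0)) \<longrightarrow>
      gsum k (\<lambda>r. (\<Delta> / \<Delta>1) powi r * X (m - k * (a - c) - b + c + (a - c) * r))
      = \<Delta> / \<Delta>2 * (\<Delta> / \<Delta>1) powi k * X m - \<Delta>1 / \<Delta>2 * X (m - (k + 1) * (a - c))) \<and>
   ((\<Delta>1 \<noteq> 0 \<and> \<Delta>2 \<noteq> 0 \<and> (k < 0 \<longrightarrow> \<Delta> \<noteq> 0)) \<longrightarrow>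
      gsum k (\<lambda>r. (\<Delta> / \<Delta>2) powi r * X (m - k * (b - c) - a + c + (b - c) * r))
      = \<Delta> / \<Delta>1 * (\<Delta> / \<Delta>2) powi k * X m - \<Delta>2 / \<Delta>1 * X (m - (k + 1) * (b - c))) \<and>
   ((\<Delta> \<noteq> 0 \<and> \<Delta>1 \<noteq> 0 \<and> (k < 0 \<longrightarrow> \<Delta>2 \<noteq> 0)) \<longrightarrow>
      gsum k (\<lambda>r. (- \<Delta>2 / \<Delta>1) powi r * X (m - k * (a - b) + b - c + (a - b) * r))
      = \<Delta>2 / \<Delta> * (- \<Delta>2 / \<Delta>1) powi k * X m + \<Delta>1 / \<Delta> * X (m - (k + 1) * (a - b)))"
proof -
  have rel: "\<Delta> * X (n - c) = \<Delta>1 * X (n - a) + \<Delta>2 * X (n - b)" for n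
    unfolding \<Delta>_def \<Delta>1_def \<Delta>2_def by (rule second_order_rec_three_term[OF assms(1)])
  have rel_swapped: "\<Delta> * X (n - c) = \<Delta>2 * X (n - b) + \<Delta>1 * X (n - a)" for n
    using rel[of n] by (simp add: algebra_simps)
  have rel_for_b: "- \<Delta>2 * X (n - b) = \<Delta>1 * X (n - a) + - \<Delta> * X (n - c)" for n
    using rel[of n] by (simp add: algebra_simps)
  have third: "gsum k (\<lambda>r. (- \<Delta>2 / \<Delta>1) powi r * X (m - k * (a - b) + b - c + (a - b) * r))
      = \<Delta>2 / \<Delta> * (- \<Delta>2 / \<Delta>1) powi k * X m + \<Delta>1 / \<Delta> * X (m - (k + 1) * (a - b))"
    if "\<Delta> \<noteq> 0" "\<Delta>1 \<noteq> 0" "k < 0 \<longrightarrow> \<Delta>2 \<noteq> 0"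
    using gsum_three_term[OF rel_for_b, of k m] that by (simp add: algebra_simps)
  show ?thesis
    using gsum_three_term[OF rel, of k m] gsum_three_term[OF rel_swapped, of k m] third by blast
qed

end
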